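(* Let $n_1,n_2\ge1$, $n=n_1n_2$, and let $R=(r_{i,j})_{i,j=0}^{n-1}$ be a Hermitian positive definite block Toeplitz matrix with $n_2\times n_2$ blocks of size $n_1\times n_1$ (i.e. $R=(R_{b-a})_{a,b=0}^{n_2-1}$, $R_m\in\mathbb{C}^{n_1\times n_1}$, $R_{-m}=R_m^H$). Define $n_1\times n_1$ matrices $P_0,\dots,P_{n_2-1}$ and $Q_0,\dots,Q_{n_2-1}$ by $$\begin{bmatrix}P_0\\ P_1\\ \vdots\\ P_{n_2-1}\end{bmatrix}:=\big[p_{0,n-1}\ p_{1,n-1}\ \cdots\ p_{n_1-1,n-1}\big],\qquad \begin{bmatrix}Q_{n_2-1}\\ \vdots\\ Q_1\\ Q_0\end{bmatrix}:=\big[q_{0,n-n_1}\ \cdots\ q_{0,n-2}\ q_{0,n-1}\big],$$ and the diagonal matrices $V'=\mathrm{diag}(v'_{0,n-1},v'_{1,n-1},\dots,v'_{n_1-1,n-1})$, $V=\mathrm{diag}(v_{0,n-n_1},\dots,v_{0,n-2},v_{0,n-1})$. Let $L_p$ be the $n\times n$ block upper triangular block Toeplitz matrix whose $(a,b)$ block is $P_{b-a}^T$ for $b\ge a$ and $0$ for $b<a$, and $L_q$ the $n\times n$ block Toeplitz matrix whose $(a,b)$ block is $Q_{n_2-(b-a)}^T$ for $b>a$ and $0$ for $b\le a$ ($0\le a,b\le n_2-1$). Let $D(M)$ denote the $n\times n$ block diagonal matrix with $n_2$ diagonal blocks all equal to $M$. Then $$R^{-1}=L_p^{H}\,D(V'^{-1})\,L_p-L_q^{H}\,D(V^{-1})\,L_q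 .$$
   Context: $X^H$ denotes the conjugate transpose. Let $e_0,\dots,e_{n-1}$ be the canonical basis column vectors of $\mathbb{C}^n$. Generalized reflection coefficients of $R$: $p_{k,k}=q_{k,k}=e_k$ for $0\le k\le n-1$; $v_{k,l}:=q_{k,l}^TRe_l$, $v'_{k,l}:=p_{k,l}^TRe_k$ (positive reals); and for $0\le k<l\le n-1$, recursively in $l-k$: $a_{k,l}=\dfrac{p_{k,l-1}^TRe_l}{v_{k+1,l}}$, $a'_{k,l}=\dfrac{q_{k+1,l}^TRe_k}{v'_{k,l-1}}$, $p_{k,l}=p_{k,l-1}-a_{k,l}q_{k+1,l}$, $q_{k,l}=q_{k+1,l}-a'_{k,l}p_{k,l-1}$. *)

theory Defs
  imports "Jordan_Normal_Form.Schur_Decomposition"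
begin

text \<open>For an n x n matrix R,
  grc R n d k = (p_{k,k+d}, q_{k,k+d}), defined by recursion on d = l - k.
  Transposes (not conjugate transposes) are used, as in the paper:
  p^T R e_l = p \<bullet> col R l (the bilinear scalar product).\<close>

fun grc :: "complex mat \<Rightarrow> nat \<Rightarrow> nat \<Rightarrow> nat \<Rightarrow> complex vec \<times> complex vec" where
  "grc R n 0 k = (unit_vec n k, unit_vec n k)"
| "grc R n (Suc d) k =
     (let pkl1 = fst (grc R n d k);         \<comment> \<open>p_{k,l-1}\<close>
          qk1l = snd (grc R n d (Suc k));   \<comment> \<open>q_{k+1,l}\<close>
          l = k + Suc d;
          a  = (pkl1 \<bullet> col R l) / (qk1l \<bullet> col R l);   \<comment> \<open>a_{k,l} = p_{k,l-1}^T R e_l / v_{k+1,l}\<close>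
          a' = (qk1l \<bullet> col R k) / (pkl1 \<bullet> col R k)    \<comment> \<open>a'_{k,l} = q_{k+1,l}^T R e_k / v'_{k,l-1}\<close>
      in (pkl1 - a \<cdot>\<^sub>v qk1l, qk1l - a' \<cdot>\<^sub>v pkl1))"

definition pvec :: "complex mat \<Rightarrow> nat \<Rightarrow> nat \<Rightarrow> nat \<Rightarrow> complex vec" where
  "pvec R n k l = fst (grc R n (l - k) k)"

definition qvec :: "complex mat \<Rightarrow> nat \<Rightarrow> nat \<Rightarrow> nat \<Rightarrow> complex vec" where
  "qvec R n k l = snd (grc R n (l - k) k)"

definition vcoef :: "complex mat \<Rightarrow> nat \<Rightarrow> nat \<Rightarrow> nat \<Rightarrow> complex" where
  "vcoef R n k l = qvec R n k l \<bullet> col R l"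

definition vcoef' :: "complex mat \<Rightarrow> nat \<Rightarrow> nat \<Rightarrow> nat \<Rightarrow> complex" where
  "vcoef' R n k l = pvec R n k l \<bullet> col R k"

definition herm_pos_def :: "nat \<Rightarrow> complex mat \<Rightarrow> bool" where
  "herm_pos_def n R \<longleftrightarrow> R \<in> carrier_mat n n \<and> mat_adjoint R = R \<and>
     (\<forall>x \<in> carrier_vec n. x \<noteq> 0\<^sub>v n \<longrightarrow>
        Im (conjugate x \<bullet> (R *\<^sub>v x)) = 0 \<and> Re (conjugate x \<bullet> (R *\<^sub>v x)) > 0)"

definition block_mat :: "nat \<Rightarrow> nat \<Rightarrow> (nat \<Rightarrow> nat \<Rightarrow> complex mat) \<Rightarrow> complex mat" where
  "block_mat n1 n2 B = mat (n1 * n2) (n1 * n2)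
     (\<lambda>(r, c). B (r div n1) (c div n1) $$ (r mod n1, c mod n1))"

definition blockdiag :: "nat \<Rightarrow> nat \<Rightarrow> complex mat \<Rightarrow> complex mat" where
  "blockdiag n1 n2 M = block_mat n1 n2 (\<lambda>a b. if a = b then M else 0\<^sub>m n1 n1)"

definition diag_of :: "nat \<Rightarrow> (nat \<Rightarrow> complex) \<Rightarrow> complex mat" where
  "diag_of m f = mat m m (\<lambda>(i, j). if i = j then f i else 0)"

end

theory Submission
  imports Defs "HOL-Library.Function_Algebras"
begin

(* The vectors q_{0,l} and p_{k,n-1} are, up to normalisation, the last row of the inverse of
   the leading principal submatrix R[0..l] and the first row of the inverse of the trailing one
   R[k..n-1]. Bordering a principal submatrix by one index adds a single rank-one term to its
   inverse, so R^{-1} = Y := sum_{t<n} conj(q_{0,t}) q_{0,t}^T / v_{0,t}, while bordering the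
   trailing block R[n1..n-1] from above gives R^{-1} = S(Y - G) + F, where S shifts down the
   diagonal by n1 (block Toeplitz structure: R[n1..n-1] is R[0..n-n1-1]), G collects the last n1
   terms of Y and F the terms conj(p_{c,n-1}) p_{c,n-1}^T / v'_{c,n-1}, c < n1. Iterating
   Y = S(Y - G) + F n2 times gives R^{-1} = sum_a (S^a F - S^{a+1} G), which is the entrywise form
   of the claimed factorisation. Positive definiteness makes every pivot v, v' nonzero and the
   inverse unique. *)

lemma sum_fun_apply: "(\<Sum>x\<in>A. f x) y = (\<Sum>x\<in>A. f x y)"
  by (induction A rule: infinite_finite_induct) auto

lemma sum_lessThan_mult:
  fixes f :: "nat \<Rightarrow> 'a::comm_monoid_add"
  shows "(\<Sum>r<m * k. f r) = (\<Sum>a<m. \<Sum>c<k. f (a * k + c))"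
proof -
  have "sum f {a * k..<a * k + k} = (\<Sum>c<k. f (a * k + c))" for a
    using sum.shift_bounds_nat_ivl[of f 0 "a * k" k] by (simp add: atLeast0LessThan add.commute)
  then show ?thesis
    by (simp flip: sum.nat_group)
qed

lemma sum_lessThan_split:
  fixes f :: "nat \<Rightarrow> 'a::comm_monoid_add"
  assumes "s \<le> n"
  shows "(\<Sum>t<n. f t) = (\<Sum>t<n - s. f t) + (\<Sum>c<s. f (n - s + c))"
proof -
  have "(\<Sum>t<n. f t) = (\<Sum>t<n - s. f t) + sum f {n - s..<n}"
    using assms sum.atLeastLessThan_concat[of 0 "n - s" n f] by (simp add: atLeast0LessThan)
  also have "sum f {n - s..<n} = (\<Sum>c<s. f (n - s + c))"
    using assms sum.shift_bounds_nat_ivl[of f 0 "n - s" s]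
    by (simp add: atLeast0LessThan add.commute)
  finally show ?thesis .
qed

lemma mat_adjoint_index:
  "A \<in> carrier_mat n m \<Longrightarrow> i < m \<Longrightarrow> j < n \<Longrightarrow> mat_adjoint A $$ (i, j) = cnj (A $$ (j, i))"
  by (simp add: mat_adjoint_def mat_of_rows_def)

lemma mat_adjoint_carrier: "A \<in> carrier_mat n m \<Longrightarrow> mat_adjoint A \<in> carrier_mat m n"
  by (simp add: mat_adjoint_def mat_of_rows_def)

subsection \<open>Hermitian positive definite matrices\<close>

lemma herm_pos_def_carrier: "herm_pos_def n R \<Longrightarrow> R \<in> carrier_mat n n"
  by (simp add: herm_pos_def_def)

lemma herm_pos_def_cnj_index:
  assumes "herm_pos_def n R" "i < n" "j < n"
  shows "cnj (R $$ (i, j)) = R $$ (j, i)"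
  using assms mat_adjoint_index[of R n n j i] by (simp add: herm_pos_def_def)

lemma herm_pos_def_row_sum:
  assumes hpd: "herm_pos_def n R" and K: "K \<subseteq> {..<n}" and i: "i < n"
  shows "(\<Sum>m\<in>K. R $$ (i, m) * cnj (f m)) = cnj (\<Sum>m\<in>K. f m * R $$ (m, i))"
proof -
  have "R $$ (i, m) = cnj (R $$ (m, i))" if "m \<in> K" for m
  proof -
    have "m < n"
      using that K by auto
    then show ?thesis
      using herm_pos_def_cnj_index[OF hpd _ i, of m] by (metis complex_cnj_cnj)
  qed
  then show ?thesis
    by (simp add: mult.commute)
qed

lemma scalar_prod_mult_conjugate:
  fixes R :: "complex mat"
  assumes x: "x \<in> carrier_vec n" and R: "R \<in> carrier_mat n n"
  shows "x \<bullet> (R *\<^sub>v conjugate x) = (\<Sum>j<n. (x \<bullet> col R j) * cnj (x $ j))"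
proof -
  have "x \<bullet> (R *\<^sub>v conjugate x) = (\<Sum>i<n. \<Sum>j<n. x $ i * R $$ (i, j) * cnj (x $ j))"
    using x R by (simp add: scalar_prod_def atLeast0LessThan sum_distrib_left mult.assoc)
  also have "\<dots> = (\<Sum>j<n. \<Sum>i<n. x $ i * R $$ (i, j) * cnj (x $ j))"
    by (rule sum.swap)
  also have "\<dots> = (\<Sum>j<n. (x \<bullet> col R j) * cnj (x $ j))"
    using x R by (simp add: scalar_prod_def atLeast0LessThan sum_distrib_right)
  finally show ?thesis .
qed

lemma herm_pos_def_form_pos:
  assumes "herm_pos_def n R" "x \<in> carrier_vec n" "x \<noteq> 0\<^sub>v n"
  shows "0 < Re (x \<bullet> (R *\<^sub>v conjugate x)) \<and> Im (x \<bullet> (R *\<^sub>v conjugate x)) = 0"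
  using assms conjugate_zero_iff_vec[of x n] unfolding herm_pos_def_def
  by (metis carrier_vec_conjugate conjugate_id)

lemma herm_pos_def_pivot_pos:
  assumes hpd: "herm_pos_def n R" and x: "x \<in> carrier_vec n" and t: "t < n" "x $ t = 1"
    and orth: "\<And>j. j < n \<Longrightarrow> j \<noteq> t \<Longrightarrow> x $ j = 0 \<or> x \<bullet> col R j = 0"
  shows "0 < Re (x \<bullet> col R t) \<and> Im (x \<bullet> col R t) = 0"
proof -
  have "x \<noteq> 0\<^sub>v n"
    using t by auto
  moreover have "x \<bullet> (R *\<^sub>v conjugate x) = x \<bullet> col R t"
  proof -
    have "x \<bullet> (R *\<^sub>v conjugate x) = (\<Sum>j\<in>{t}. (x \<bullet> col R j) * cnj (x $ j))"
      unfolding scalar_prod_mult_conjugate[OF x herm_pos_def_carrier[OF hpd]]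
      by (rule sum.mono_neutral_right) (use t orth in auto)
    then show ?thesis using t by simp
  qed
  ultimately show ?thesis
    using herm_pos_def_form_pos[OF hpd x] by simp
qed

definition fun_of_vec :: "'a::zero vec \<Rightarrow> nat \<Rightarrow> 'a" where
  "fun_of_vec x i = (if i < dim_vec x then x $ i else 0)"

lemma scalar_prod_col_eq_sum:
  fixes R :: "complex mat"
  assumes x: "x \<in> carrier_vec n" and R: "R \<in> carrier_mat n n" and K: "K \<subseteq> {..<n}"
    and supp: "\<And>i. i < n \<Longrightarrow> i \<notin> K \<Longrightarrow> x $ i = 0" and j: "j < n"
  shows "x \<bullet> col R j = (\<Sum>m\<in>K. fun_of_vec x m * R $$ (m, j))"
proof -
  have "x \<bullet> col R j = (\<Sum>m<n. x $ m * R $$ (m, j))"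
    using x R j by (simp add: scalar_prod_def atLeast0LessThan)
  also have "\<dots> = (\<Sum>m\<in>K. x $ m * R $$ (m, j))"
    by (rule sum.mono_neutral_right) (use K supp in auto)
  also have "\<dots> = (\<Sum>m\<in>K. fun_of_vec x m * R $$ (m, j))"
    using K x by (intro sum.cong) (auto simp: fun_of_vec_def)
  finally show ?thesis .
qed

lemma herm_pos_def_left_kernel:
  assumes hpd: "herm_pos_def n R" and K: "K \<subseteq> {..<n}"
    and ker: "\<And>j. j \<in> K \<Longrightarrow> (\<Sum>m\<in>K. d m * R $$ (m, j)) = 0" and m: "m \<in> K"
  shows "d m = 0"
proof -
  have R: "R \<in> carrier_mat n n"
    using hpd by (rule herm_pos_def_carrier)
  define x where "x = vec n (\<lambda>i. if i \<in> K then d i else 0)"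
  have x: "x \<in> carrier_vec n"
    by (simp add: x_def)
  have "x \<bullet> col R j = 0" if "j \<in> K" for j
  proof -
    have "x \<bullet> col R j = (\<Sum>m\<in>K. fun_of_vec x m * R $$ (m, j))"
      by (rule scalar_prod_col_eq_sum[OF x R K]) (use K that in \<open>auto simp: x_def\<close>)
    also have "\<dots> = (\<Sum>m\<in>K. d m * R $$ (m, j))"
      using K by (intro sum.cong) (auto simp: x_def fun_of_vec_def)
    finally show ?thesis using ker[OF that] by simp
  qed
  then have "x \<bullet> (R *\<^sub>v conjugate x) = 0"
    unfolding scalar_prod_mult_conjugate[OF x R] by (intro sum.neutral) (auto simp: x_def)
  then have "x = 0\<^sub>v n"
    using herm_pos_def_form_pos[OF hpd x] by fastforce
  then show ?thesis
    using m K by (auto simp: x_def dest!: arg_cong[where f = "\<lambda>v. v $ m"])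
qed

subsection \<open>Generalized reflection coefficients\<close>

text \<open>\<open>p\<^sub>k\<^sub>,\<^sub>l\<close> satisfies \<open>orth_unit R n {k<..l} k\<close> and \<open>q\<^sub>k\<^sub>,\<^sub>l\<close> satisfies
  \<open>orth_unit R n {k..<l} l\<close> (orthogonality is with respect to the bilinear form \<open>x\<^sup>T R y\<close>).\<close>
definition orth_unit :: "complex mat \<Rightarrow> nat \<Rightarrow> nat set \<Rightarrow> nat \<Rightarrow> complex vec \<Rightarrow> bool" where
  "orth_unit R n K t x \<longleftrightarrow> x \<in> carrier_vec n \<and> x $ t = 1 \<and>
     (\<forall>i<n. i \<notin> insert t K \<longrightarrow> x $ i = 0) \<and> (\<forall>j\<in>K. x \<bullet> col R j = 0)"

lemma orth_unit_carrier: "orth_unit R n K t x \<Longrightarrow> x \<in> carrier_vec n"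
  by (simp add: orth_unit_def)

lemma orth_unit_pivot_pos:
  assumes "herm_pos_def n R" "orth_unit R n K t x" "t < n"
  shows "0 < Re (x \<bullet> col R t) \<and> Im (x \<bullet> col R t) = 0"
  using assms by (intro herm_pos_def_pivot_pos) (auto simp: orth_unit_def)

lemma orth_unit_eliminate:
  assumes R: "R \<in> carrier_mat n n" and x: "orth_unit R n K t x" and y: "orth_unit R n K' t' y"
    and t: "t < n" "t \<notin> insert t' K'" and s: "y \<bullet> col R s \<noteq> 0"
    and supp: "insert t K \<union> insert t' K' \<subseteq> insert t K''" and K'': "K'' \<subseteq> insert s (K \<inter> K')"
  shows "orth_unit R n K'' t (x - (x \<bullet> col R s / (y \<bullet> col R s)) \<cdot>\<^sub>v y)"
proof -
  let ?c = "x \<bullet> col R s / (y \<bullet> col R s)"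
  have xc: "x \<in> carrier_vec n" and yc: "y \<in> carrier_vec n"
    using x y by (auto simp: orth_unit_def)
  have col: "\<And>j. col R j \<in> carrier_vec n"
    using R by (metis carrier_matD(1) carrier_vecI col_dim)
  have prod: "(x - ?c \<cdot>\<^sub>v y) \<bullet> col R j = x \<bullet> col R j - ?c * (y \<bullet> col R j)" for j
    using xc yc col[of j] by (simp add: minus_scalar_prod_distrib[of x n] smult_scalar_prod_distrib)
  show ?thesis
    unfolding orth_unit_def
  proof (intro conjI allI impI ballI)
    show "(x - ?c \<cdot>\<^sub>v y) $ t = 1"
      using x y t xc yc by (simp add: orth_unit_def)
    show "(x - ?c \<cdot>\<^sub>v y) $ i = 0" if "i < n" "i \<notin> insert t K''" for i
    proof -
      have "x $ i = 0" "y $ i = 0"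
        using x y that supp unfolding orth_unit_def by blast+
      then show ?thesis using that xc yc by simp
    qed
    show "(x - ?c \<cdot>\<^sub>v y) \<bullet> col R j = 0" if "j \<in> K''" for j
      using that K'' x y s unfolding prod by (auto simp: orth_unit_def)
  qed (use xc yc in simp)
qed

lemma grc_orth_unit:
  assumes hpd: "herm_pos_def n R"
  shows "k + d < n \<Longrightarrow> orth_unit R n {k<..k + d} k (fst (grc R n d k))
    \<and> orth_unit R n {k..<k + d} (k + d) (snd (grc R n d k))"
proof (induction d arbitrary: k)
  case 0
  then show ?case by (simp add: orth_unit_def)
next
  case (Suc d)
  define l where "l = k + Suc d"
  define p where "p = fst (grc R n d k)"
  define q where "q = snd (grc R n d (Suc k))"
  have R: "R \<in> carrier_mat n n"
    using hpd by (rule herm_pos_def_carrier)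
  have p: "orth_unit R n {k<..k + d} k p" and q: "orth_unit R n {Suc k..<l} l q"
    using Suc.IH[of k] Suc.IH[of "Suc k"] Suc.prems by (auto simp: p_def q_def l_def)
  have "p \<bullet> col R k \<noteq> 0" and "q \<bullet> col R l \<noteq> 0"
    using orth_unit_pivot_pos[OF hpd p] orth_unit_pivot_pos[OF hpd q] Suc.prems l_def by auto
  moreover have "grc R n (Suc d) k = (p - (p \<bullet> col R l / (q \<bullet> col R l)) \<cdot>\<^sub>v q,
      q - (q \<bullet> col R k / (p \<bullet> col R k)) \<cdot>\<^sub>v p)"
    by (simp add: Let_def p_def q_def l_def)
  ultimately show ?case
    using orth_unit_eliminate[OF R p q, where s = l and K'' = "{k<..l}"]
      orth_unit_eliminate[OF R q p, where s = k and K'' = "{k..<l}"]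
      Suc.prems l_def by fastforce
qed

lemma pvec_orth_unit:
  "herm_pos_def n R \<Longrightarrow> k \<le> l \<Longrightarrow> l < n \<Longrightarrow> orth_unit R n {k<..l} k (pvec R n k l)"
  using grc_orth_unit[of n R k "l - k"] by (simp add: pvec_def)

lemma qvec_orth_unit:
  "herm_pos_def n R \<Longrightarrow> k \<le> l \<Longrightarrow> l < n \<Longrightarrow> orth_unit R n {k..<l} l (qvec R n k l)"
  using grc_orth_unit[of n R k "l - k"] by (simp add: qvec_def)

subsection \<open>Shifts along the diagonal\<close>

definition diag_shift :: "nat \<Rightarrow> (nat \<Rightarrow> nat \<Rightarrow> 'a::zero) \<Rightarrow> nat \<Rightarrow> nat \<Rightarrow> 'a" where
  "diag_shift s Z i j = (if s \<le> i \<and> s \<le> j then Z (i - s) (j - s) else 0)"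

lemma diag_shift_diag_shift: "diag_shift s (diag_shift t Z) = diag_shift (s + t) Z"
  by (auto simp: fun_eq_iff diag_shift_def)

lemma diag_shift_add:
  fixes A B :: "nat \<Rightarrow> nat \<Rightarrow> 'a::monoid_add"
  shows "diag_shift s (A + B) = diag_shift s A + diag_shift s B"
  by (auto simp: fun_eq_iff diag_shift_def)

lemma diag_shift_diff:
  fixes A B :: "nat \<Rightarrow> nat \<Rightarrow> 'a::group_add"
  shows "diag_shift s (A - B) = diag_shift s A - diag_shift s B"
  by (auto simp: fun_eq_iff diag_shift_def)

lemma diag_shift_sum_apply: "diag_shift s (\<Sum>c\<in>A. f c) i j = (\<Sum>c\<in>A. diag_shift s (f c) i j)"
  by (cases "s \<le> i"; cases "s \<le> j") (simp_all add: diag_shift_def sum_fun_apply)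

lemma diag_shift_telescope:
  fixes Y F G :: "nat \<Rightarrow> nat \<Rightarrow> 'a::ab_group_add"
  assumes rec: "Y = diag_shift s (Y - G) + F"
  shows "Y = diag_shift (m * s) Y + (\<Sum>a<m. diag_shift (a * s) F - diag_shift (Suc a * s) G)"
proof (induction m)
  case 0
  show ?case by (simp add: fun_eq_iff diag_shift_def)
next
  case (Suc m)
  have "diag_shift (m * s) Y = diag_shift (m * s) (diag_shift s (Y - G) + F)"
    using rec by (rule arg_cong)
  also have "\<dots> = diag_shift (Suc m * s) Y - diag_shift (Suc m * s) G + diag_shift (m * s) F"
    by (simp add: diag_shift_add diag_shift_diff diag_shift_diag_shift add.commute)
  finally have step: "diag_shift (m * s) Y
      = diag_shift (Suc m * s) Y - diag_shift (Suc m * s) G + diag_shift (m * s) F" .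
  have "Y = diag_shift (m * s) Y + (\<Sum>a<m. diag_shift (a * s) F - diag_shift (Suc a * s) G)"
    by (rule Suc.IH)
  also have "\<dots> = diag_shift (Suc m * s) Y
      + (\<Sum>a<Suc m. diag_shift (a * s) F - diag_shift (Suc a * s) G)"
    by (simp only: step sum.lessThan_Suc) (simp add: algebra_simps)
  finally show ?case .
qed

lemma diag_shift_telescope_index:
  fixes Y F G :: "nat \<Rightarrow> nat \<Rightarrow> 'a::ab_group_add"
  assumes rec: "Y = diag_shift s (Y - G) + F" and i: "i < m * s"
  shows "Y i j = (\<Sum>a<m. diag_shift (a * s) F i j) - (\<Sum>a<m. diag_shift (Suc a * s) G i j)"
  using fun_cong[OF fun_cong[OF diag_shift_telescope[OF rec, of m]], of i j] i
  by (simp add: diag_shift_def sum_fun_apply sum_subtractf)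

subsection \<open>Inverses of principal submatrices\<close>

text \<open>Square matrices are handled as functions on \<open>nat \<times> nat\<close>, so that principal submatrices on
  arbitrary index sets and their shifts are easy to express.\<close>
definition inverse_on :: "(nat \<Rightarrow> nat \<Rightarrow> 'a::semiring_1) \<Rightarrow> nat set \<Rightarrow> (nat \<Rightarrow> nat \<Rightarrow> 'a) \<Rightarrow> bool" where
  "inverse_on r K Y \<longleftrightarrow> (\<forall>i j. i \<notin> K \<or> j \<notin> K \<longrightarrow> Y i j = 0) \<and>
     (\<forall>i\<in>K. \<forall>j\<in>K. (\<Sum>m\<in>K. Y i m * r m j) = (if i = j then 1 else 0))"

lemma inverse_on_unique:
  fixes r :: "nat \<Rightarrow> nat \<Rightarrow> 'a::ring_1"
  assumes ker: "\<And>d m. (\<And>j. j \<in> K \<Longrightarrow> (\<Sum>m'\<in>K. d m' * r m' j) = 0) \<Longrightarrow> m \<in> K \<Longrightarrow> d m = 0"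
    and Y: "inverse_on r K Y" and Y': "inverse_on r K Y'"
  shows "Y = Y'"
proof (intro ext)
  fix i m
  show "Y i m = Y' i m"
  proof (cases "i \<in> K \<and> m \<in> K")
    case True
    have "(\<Sum>m'\<in>K. (Y i m' - Y' i m') * r m' j) = 0" if "j \<in> K" for j
      using Y Y' True that by (simp add: inverse_on_def left_diff_distrib sum_subtractf)
    then show ?thesis
      using ker[of "\<lambda>m'. Y i m' - Y' i m'" m] True by simp
  next
    case False
    then show ?thesis
      using Y Y' by (auto simp: inverse_on_def)
  qed
qed

lemma inverse_on_border_col:
  fixes r Y :: "nat \<Rightarrow> nat \<Rightarrow> 'a::comm_ring_1"
  assumes K: "finite K" "t \<notin> K" and Y: "inverse_on r K Y"
    and z: "z t = 1" "\<And>i. i \<in> K \<Longrightarrow> (\<Sum>m\<in>insert t K. r i m * z m) = 0" and i: "i \<in> K"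
  shows "(\<Sum>m\<in>K. Y i m * r m t) = - z i"
proof -
  have r_col_t: "r m t = - (\<Sum>m'\<in>K. r m m' * z m')" if "m \<in> K" for m
    using z(2)[OF that] K z(1) by (simp add: add_eq_0_iff)
  have "(\<Sum>m\<in>K. Y i m * r m t) = - (\<Sum>m\<in>K. \<Sum>m'\<in>K. Y i m * r m m' * z m')"
    using r_col_t by (simp add: sum_distrib_left sum_negf mult.assoc)
  also have "\<dots> = - (\<Sum>m'\<in>K. (\<Sum>m\<in>K. Y i m * r m m') * z m')"
    by (subst sum.swap) (simp add: sum_distrib_right)
  also have "\<dots> = - (\<Sum>m'\<in>K. if i = m' then z m' else 0)"
    using Y i by (intro arg_cong[where f = uminus] sum.cong) (auto simp: inverse_on_def)
  also have "\<dots> = - z i"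
    using i K by simp
  finally show ?thesis .
qed

lemma inverse_on_insert:
  fixes r Y :: "nat \<Rightarrow> nat \<Rightarrow> 'a::field"
  assumes K: "finite K" "t \<notin> K" and Y: "inverse_on r K Y"
    and x: "x t = 1" "\<And>i. i \<notin> insert t K \<Longrightarrow> x i = 0"
      "\<And>j. j \<in> K \<Longrightarrow> (\<Sum>m\<in>insert t K. x m * r m j) = 0"
    and z: "z t = 1" "\<And>i. i \<notin> insert t K \<Longrightarrow> z i = 0"
      "\<And>i. i \<in> K \<Longrightarrow> (\<Sum>m\<in>insert t K. r i m * z m) = 0"
    and v: "(\<Sum>m\<in>insert t K. x m * r m t) = v" "v \<noteq> 0"
  shows "inverse_on r (insert t K) (\<lambda>i j. Y i j + z i * x j / v)"
proof -
  have Y0: "\<And>i j. i \<notin> K \<or> j \<notin> K \<Longrightarrow> Y i j = 0"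
    and Y1: "\<And>i j. i \<in> K \<Longrightarrow> j \<in> K \<Longrightarrow> (\<Sum>m\<in>K. Y i m * r m j) = (if i = j then 1 else 0)"
    using Y by (auto simp: inverse_on_def)
  have Y_row_t: "Y t m = 0" for m
    using Y0 K(2) by simp
  have row: "(\<Sum>m\<in>insert t K. (Y i m + z i * x m / v) * r m j)
      = (\<Sum>m\<in>K. Y i m * r m j) + z i / v * (\<Sum>m\<in>insert t K. x m * r m j)" for i j
    using K Y0 by (simp add: sum.distrib sum_distrib_left algebra_simps)
  show ?thesis
    unfolding inverse_on_def
  proof (intro conjI allI impI ballI)
    show "Y i j + z i * x j / v = 0" if "i \<notin> insert t K \<or> j \<notin> insert t K" for i j
      using that Y0 x(2) z(2) by auto
    show "(\<Sum>m\<in>insert t K. (Y i m + z i * x m / v) * r m j) = (if i = j then 1 else 0)"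
      if i: "i \<in> insert t K" and j: "j \<in> insert t K" for i j
    proof (cases "j = t")
      case True
      then show ?thesis
        unfolding row using i Y_row_t inverse_on_border_col[OF K Y z(1) z(3)] z(1) v
        by (cases "i = t") simp_all
    next
      case False
      then have "j \<in> K"
        using j by simp
      then show ?thesis
        unfolding row using i Y_row_t Y1 x(3) False by (cases "i = t") simp_all
    qed
  qed
qed

lemma inverse_on_diag_shift:
  assumes inv: "inverse_on r K Y" and shift: "\<And>a b. a \<in> K \<Longrightarrow> b \<in> K \<Longrightarrow> r (a + s) (b + s) = r a b"
  shows "inverse_on r ((\<lambda>i. i + s) ` K) (diag_shift s Y)"
  unfolding inverse_on_def
proof (intro conjI allI impI ballI)
  fix i j assume "i \<notin> (\<lambda>i. i + s) ` K \<or> j \<notin> (\<lambda>i. i + s) ` K"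
  then have "\<not> (s \<le> i \<and> s \<le> j) \<or> i - s \<notin> K \<or> j - s \<notin> K"
    by (metis image_eqI le_add_diff_inverse2)
  then show "diag_shift s Y i j = 0"
    using inv by (auto simp: inverse_on_def diag_shift_def)
next
  fix i j assume "i \<in> (\<lambda>i. i + s) ` K" and "j \<in> (\<lambda>i. i + s) ` K"
  then obtain a b where a: "a \<in> K" "i = a + s" and b: "b \<in> K" "j = b + s"
    by auto
  have "(\<Sum>m\<in>(\<lambda>i. i + s) ` K. diag_shift s Y i m * r m j) = (\<Sum>m\<in>K. Y a m * r (m + s) (b + s))"
    by (subst sum.reindex) (auto simp: a b inj_on_def diag_shift_def)
  also have "\<dots> = (\<Sum>m\<in>K. Y a m * r m b)"
    using shift a b by (intro sum.cong) auto
  finally show "(\<Sum>m\<in>(\<lambda>i. i + s) ` K. diag_shift s Y i m * r m j) = (if i = j then 1 else 0)"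
    using inv a b by (simp add: inverse_on_def)
qed

lemma inverse_on_inverts_mat:
  fixes R X :: "complex mat"
  assumes R: "R \<in> carrier_mat n n" and X: "X \<in> carrier_mat n n"
    and Y: "inverse_on (\<lambda>i j. R $$ (i, j)) {..<n} Y"
    and XY: "\<And>i j. i < n \<Longrightarrow> j < n \<Longrightarrow> X $$ (i, j) = Y i j"
  shows "inverts_mat R X \<and> inverts_mat X R"
proof -
  have "X * R = 1\<^sub>m n"
  proof (rule eq_matI)
    fix i j
    assume "i < dim_row (1\<^sub>m n :: complex mat)" "j < dim_col (1\<^sub>m n :: complex mat)"
    then have i: "i < n" and j: "j < n"
      by auto
    have "(X * R) $$ (i, j) = (\<Sum>m<n. Y i m * R $$ (m, j))"
      using X R i j XY by (simp add: scalar_prod_def atLeast0LessThan)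
    also have "\<dots> = 1\<^sub>m n $$ (i, j)"
      using Y i j by (simp add: inverse_on_def)
    finally show "(X * R) $$ (i, j) = 1\<^sub>m n $$ (i, j)" .
  qed (use X R in auto)
  moreover from this have "R * X = 1\<^sub>m n"
    by (rule mat_mult_left_right_inverse[OF X R])
  ultimately show ?thesis
    using R X by (simp add: inverts_mat_def)
qed

definition dyad :: "complex vec \<Rightarrow> complex \<Rightarrow> nat \<Rightarrow> nat \<Rightarrow> complex" where
  "dyad x v i j = cnj (fun_of_vec x i) * fun_of_vec x j / v"

lemma inverse_on_insert_orth_unit:
  assumes hpd: "herm_pos_def n R" and x: "orth_unit R n K t x"
    and Kn: "insert t K \<subseteq> {..<n}" and t: "t \<notin> K"
    and Y: "inverse_on (\<lambda>i j. R $$ (i, j)) K Y"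
  shows "inverse_on (\<lambda>i j. R $$ (i, j)) (insert t K) (Y + dyad x (x \<bullet> col R t))"
proof -
  have R: "R \<in> carrier_mat n n"
    using hpd by (rule herm_pos_def_carrier)
  have xc: "x \<in> carrier_vec n" and xt: "x $ t = 1" and orth: "\<And>j. j \<in> K \<Longrightarrow> x \<bullet> col R j = 0"
    and supp: "\<And>i. i < n \<Longrightarrow> i \<notin> insert t K \<Longrightarrow> x $ i = 0"
    using x by (auto simp: orth_unit_def)
  have col: "x \<bullet> col R j = (\<Sum>m\<in>insert t K. fun_of_vec x m * R $$ (m, j))" if "j < n" for j
    by (rule scalar_prod_col_eq_sum[OF xc R Kn supp that])
  have x_outside: "fun_of_vec x i = 0" if "i \<notin> insert t K" for i
    using supp[OF _ that] xc by (simp add: fun_of_vec_def)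
  have x_pivot: "fun_of_vec x t = 1"
    using xt xc Kn by (simp add: fun_of_vec_def)
  have "inverse_on (\<lambda>i j. R $$ (i, j)) (insert t K)
      (\<lambda>i j. Y i j + cnj (fun_of_vec x i) * fun_of_vec x j / (x \<bullet> col R t))"
  proof (rule inverse_on_insert[OF finite_subset[OF _ finite_lessThan] t Y])
    show "(\<Sum>m\<in>insert t K. fun_of_vec x m * R $$ (m, j)) = 0" if "j \<in> K" for j
      using col[of j] orth[OF that] that Kn by auto
    show "(\<Sum>m\<in>insert t K. R $$ (i, m) * cnj (fun_of_vec x m)) = 0" if "i \<in> K" for i
    proof -
      have "i < n"
        using that Kn by auto
      then show ?thesis
        using herm_pos_def_row_sum[OF hpd Kn, of i "fun_of_vec x"] col[of i] orth[OF that]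
        by (simp del: cnj_sum)
    qed
    show "(\<Sum>m\<in>insert t K. fun_of_vec x m * R $$ (m, t)) = x \<bullet> col R t"
      using col[of t] Kn by auto
    show "x \<bullet> col R t \<noteq> 0"
      using orth_unit_pivot_pos[OF hpd x] Kn by auto
  qed (use Kn x_outside x_pivot in auto)
  moreover have "Y + dyad x (x \<bullet> col R t)
      = (\<lambda>i j. Y i j + cnj (fun_of_vec x i) * fun_of_vec x j / (x \<bullet> col R t))"
    by (intro ext) (simp add: dyad_def)
  ultimately show ?thesis
    by simp
qed

lemma inverse_on_qvec_dyads:
  assumes hpd: "herm_pos_def n R" and "l \<le> n"
  shows "inverse_on (\<lambda>i j. R $$ (i, j)) {..<l} (\<Sum>t<l. dyad (qvec R n 0 t) (vcoef R n 0 t))"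
  using \<open>l \<le> n\<close>
proof (induction l)
  case 0
  then show ?case by (simp add: inverse_on_def)
next
  case (Suc l)
  have "orth_unit R n {..<l} l (qvec R n 0 l)"
    using qvec_orth_unit[OF hpd, of 0 l] Suc.prems by (simp add: atLeast0LessThan)
  then have "inverse_on (\<lambda>i j. R $$ (i, j)) (insert l {..<l})
      ((\<Sum>t<l. dyad (qvec R n 0 t) (vcoef R n 0 t)) + dyad (qvec R n 0 l) (qvec R n 0 l \<bullet> col R l))"
    by (rule inverse_on_insert_orth_unit[OF hpd]) (use Suc in auto)
  moreover have "(\<Sum>t<l. dyad (qvec R n 0 t) (vcoef R n 0 t))
      + dyad (qvec R n 0 l) (qvec R n 0 l \<bullet> col R l)
      = (\<Sum>t<Suc l. dyad (qvec R n 0 t) (vcoef R n 0 t))"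
    by (simp add: vcoef_def)
  ultimately show ?case
    by (simp only: lessThan_Suc)
qed

lemma inverse_on_pvec_dyads:
  assumes hpd: "herm_pos_def n R" and Z: "inverse_on (\<lambda>i j. R $$ (i, j)) {s..<n} Z"
    and "m \<le> s" "s \<le> n"
  shows "inverse_on (\<lambda>i j. R $$ (i, j)) {m..<n}
    (Z + (\<Sum>c\<in>{m..<s}. dyad (pvec R n c (n - 1)) (vcoef' R n c (n - 1))))"
  using \<open>m \<le> s\<close>
proof (induction m rule: inc_induct)
  case base
  then show ?case using Z by simp
next
  case (step m)
  have "{m<..n - 1} = {Suc m..<n}"
    using step.hyps \<open>s \<le> n\<close> by auto
  then have "orth_unit R n {Suc m..<n} m (pvec R n m (n - 1))"
    using pvec_orth_unit[OF hpd, of m "n - 1"] step.hyps \<open>s \<le> n\<close> by simp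
  then have "inverse_on (\<lambda>i j. R $$ (i, j)) (insert m {Suc m..<n})
      (Z + (\<Sum>c\<in>{Suc m..<s}. dyad (pvec R n c (n - 1)) (vcoef' R n c (n - 1)))
        + dyad (pvec R n m (n - 1)) (pvec R n m (n - 1) \<bullet> col R m))"
    by (rule inverse_on_insert_orth_unit[OF hpd _ _ _ step.IH]) (use step.hyps \<open>s \<le> n\<close> in auto)
  moreover have "insert m {Suc m..<n} = {m..<n}"
    using step.hyps \<open>s \<le> n\<close> by auto
  moreover have "Z + (\<Sum>c\<in>{Suc m..<s}. dyad (pvec R n c (n - 1)) (vcoef' R n c (n - 1)))
        + dyad (pvec R n m (n - 1)) (pvec R n m (n - 1) \<bullet> col R m)
      = Z + (\<Sum>c\<in>{m..<s}. dyad (pvec R n c (n - 1)) (vcoef' R n c (n - 1)))"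
    using step.hyps by (simp add: sum.atLeast_Suc_lessThan vcoef'_def add_ac)
  ultimately show ?case
    by (simp only:)
qed

text \<open>Both sides invert \<open>R\<close>: the left one by bordering from the top left, the right one by
  bordering the shifted inverse of the leading \<open>(n - s) \<times> (n - s)\<close> block from the top.\<close>
lemma qvec_dyads_recursion:
  assumes hpd: "herm_pos_def n R" and "s \<le> n"
    and toeplitz: "\<And>i j. i < n - s \<Longrightarrow> j < n - s \<Longrightarrow> R $$ (i + s, j + s) = R $$ (i, j)"
  defines "Y \<equiv> \<Sum>t<n. dyad (qvec R n 0 t) (vcoef R n 0 t)"
    and "G \<equiv> \<Sum>c<s. dyad (qvec R n 0 (n - s + c)) (vcoef R n 0 (n - s + c))"
    and "F \<equiv> \<Sum>c<s. dyad (pvec R n c (n - 1)) (vcoef' R n c (n - 1))"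
  shows "Y = diag_shift s (Y - G) + F"
proof -
  let ?r = "\<lambda>i j. R $$ (i, j)"
  have "Y - G = (\<Sum>t<n - s. dyad (qvec R n 0 t) (vcoef R n 0 t))"
    unfolding Y_def G_def by (simp add: sum_lessThan_split[OF \<open>s \<le> n\<close>])
  then have "inverse_on ?r {..<n - s} (Y - G)"
    using inverse_on_qvec_dyads[OF hpd, of "n - s"] by simp
  then have "inverse_on ?r ((\<lambda>i. i + s) ` {..<n - s}) (diag_shift s (Y - G))"
    by (intro inverse_on_diag_shift) (auto simp: toeplitz)
  moreover have "(\<lambda>i. i + s) ` {..<n - s} = {s..<n}"
    using \<open>s \<le> n\<close> by (simp flip: atLeast0LessThan)
  ultimately have shifted: "inverse_on ?r {..<n} (diag_shift s (Y - G) + F)"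
    using inverse_on_pvec_dyads[OF hpd, of s _ 0] \<open>s \<le> n\<close> by (simp add: F_def atLeast0LessThan)
  have direct: "inverse_on ?r {..<n} Y"
    unfolding Y_def by (rule inverse_on_qvec_dyads[OF hpd order_refl])
  have "\<And>d m. (\<And>j. j \<in> {..<n} \<Longrightarrow> (\<Sum>m'\<in>{..<n}. d m' * R $$ (m', j)) = 0)
      \<Longrightarrow> m \<in> {..<n} \<Longrightarrow> d m = 0"
    by (rule herm_pos_def_left_kernel[OF hpd subset_refl])
  then show ?thesis
    using direct shifted by (rule inverse_on_unique)
qed

subsection \<open>Block matrices\<close>

lemma block_index_less:
  fixes a c n1 n2 :: nat
  assumes "a < n2" "c < n1"
  shows "a * n1 + c < n1 * n2"
proof -
  have "a * n1 + c < Suc a * n1" and "Suc a * n1 \<le> n2 * n1"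
    using assms mult_le_mono1[of "Suc a" n2 n1] by simp_all
  then show ?thesis
    by (simp add: mult.commute)
qed

lemma block_index_decompose:
  fixes i n1 n2 :: nat
  assumes "i < n1 * n2"
  obtains a c where "a < n2" "c < n1" "i = a * n1 + c"
proof
  have "0 < n1"
    using assms by (cases n1) auto
  then show "i div n1 < n2" "i mod n1 < n1"
    using assms by (auto simp: less_mult_imp_div_less mult.commute)
  show "i = i div n1 * n1 + i mod n1"
    by simp
qed

lemma block_index_eq_iff:
  fixes a b c e n1 :: nat
  assumes "c < n1" "e < n1"
  shows "a * n1 + c = b * n1 + e \<longleftrightarrow> a = b \<and> c = e"
proof
  assume eq: "a * n1 + c = b * n1 + e"
  have "(a * n1 + c) div n1 = a" "(a * n1 + c) mod n1 = c"
    "(b * n1 + e) div n1 = b" "(b * n1 + e) mod n1 = e"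
    using assms by auto
  then show "a = b \<and> c = e"
    using eq by metis
qed simp

lemma block_mat_carrier: "block_mat n1 n2 B \<in> carrier_mat (n1 * n2) (n1 * n2)"
  by (simp add: block_mat_def)

lemma block_mat_index:
  assumes "a < n2" "c < n1" "b < n2" "e < n1"
  shows "block_mat n1 n2 B $$ (a * n1 + c, b * n1 + e) = B a b $$ (c, e)"
  using assms block_index_less[of a n2 c n1] block_index_less[of b n2 e n1]
  by (simp add: block_mat_def)

lemma block_toeplitz_shift:
  assumes "i < n1 * n2 - n1" "j < n1 * n2 - n1"
  shows "block_mat n1 n2 (\<lambda>a b. T (int b - int a)) $$ (i + n1, j + n1)
    = block_mat n1 n2 (\<lambda>a b. T (int b - int a)) $$ (i, j)"
proof -
  have "0 < n1"
    using assms by (cases n1) auto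
  then show ?thesis
    using assms by (simp add: block_mat_def)
qed

lemma blockdiag_diag_of_index:
  assumes "i < n1 * n2" "j < n1 * n2"
  shows "blockdiag n1 n2 (diag_of n1 f) $$ (i, j) = (if i = j then f (i mod n1) else 0)"
proof -
  obtain a c b e where "a < n2" "c < n1" "i = a * n1 + c" "b < n2" "e < n1" "j = b * n1 + e"
    using block_index_decompose assms by metis
  then show ?thesis
    by (auto simp: blockdiag_def block_mat_index diag_of_def block_index_eq_iff)
qed

lemma adjoint_diag_mult_index:
  fixes L D :: "complex mat"
  assumes L: "L \<in> carrier_mat m n" and D: "D \<in> carrier_mat m m"
    and diag: "\<And>r s. r < m \<Longrightarrow> s < m \<Longrightarrow> D $$ (r, s) = (if r = s then d r else 0)"
    and i: "i < n" and j: "j < n"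
  shows "(mat_adjoint L * D * L) $$ (i, j) = (\<Sum>r<m. cnj (L $$ (r, i)) * d r * L $$ (r, j))"
proof -
  have "mat_adjoint L * D = mat n m (\<lambda>(i, r). cnj (L $$ (r, i)) * d r)" (is "_ = ?M")
  proof (rule eq_matI)
    fix i r
    assume "i < dim_row ?M" and "r < dim_col ?M"
    then have i: "i < n" and r: "r < m"
      by auto
    have "(mat_adjoint L * D) $$ (i, r) = (\<Sum>s<m. mat_adjoint L $$ (i, s) * D $$ (s, r))"
      using mat_adjoint_carrier[OF L] D i r by (simp add: scalar_prod_def atLeast0LessThan)
    also have "\<dots> = (\<Sum>s<m. if s = r then cnj (L $$ (r, i)) * d r else 0)"
      using diag r mat_adjoint_index[OF L i] by (intro sum.cong) auto
    finally show "(mat_adjoint L * D) $$ (i, r) = ?M $$ (i, r)"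
      using i r by simp
  qed (use mat_adjoint_carrier[OF L] D in auto)
  then show ?thesis
    using L i j by (simp add: scalar_prod_def atLeast0LessThan mult.assoc)
qed

lemma block_toeplitz_rows:
  assumes B: "\<And>a b. a < n2 \<Longrightarrow> b < n2 \<Longrightarrow> B a b = (if a + k \<le> b
      then transpose_mat (mat n1 n1 (\<lambda>(e, c). x c $ ((b - a - k) * n1 + e))) else 0\<^sub>m n1 n1)"
    and dim: "\<And>c. c < n1 \<Longrightarrow> dim_vec (x c) = n1 * n2"
    and a: "a < n2" and c: "c < n1" and i: "i < n1 * n2"
  shows "block_mat n1 n2 B $$ (a * n1 + c, i)
    = (if (a + k) * n1 \<le> i then fun_of_vec (x c) (i - (a + k) * n1) else 0)"
proof -
  obtain b e where b: "b < n2" and e: "e < n1" and i_eq: "i = b * n1 + e"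
    using block_index_decompose[OF i] by metis
  show ?thesis
  proof (cases "a + k \<le> b")
    case True
    have le: "(a + k) * n1 \<le> b * n1"
      using True by (rule mult_le_mono1)
    then have "(a + k) * n1 \<le> i"
      using i_eq by linarith
    moreover have "i - (a + k) * n1 = (b - a - k) * n1 + e"
      using le i_eq by (simp add: diff_mult_distrib diff_diff_left)
    moreover have "(b - a - k) * n1 + e < n1 * n2"
      using b e by (intro block_index_less) auto
    ultimately show ?thesis
      using True a b c e i_eq dim by (simp add: block_mat_index B fun_of_vec_def)
  next
    case False
    then have "i < (a + k) * n1"
      using i_eq e mult_le_mono1[of "Suc b" "a + k" n1] by simp
    then show ?thesis
      using False a b c e i_eq by (simp add: block_mat_index B)
  qed
qed

lemma block_gram_diag_shift:
  assumes L: "L \<in> carrier_mat (n1 * n2) (n1 * n2)"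
    and rows: "\<And>a c i. a < n2 \<Longrightarrow> c < n1 \<Longrightarrow> i < n1 * n2 \<Longrightarrow>
      L $$ (a * n1 + c, i) = (if (a + k) * n1 \<le> i then fun_of_vec (x c) (i - (a + k) * n1) else 0)"
    and i: "i < n1 * n2" and j: "j < n1 * n2"
  shows "(mat_adjoint L * blockdiag n1 n2 (diag_of n1 (\<lambda>c. inverse (w c))) * L) $$ (i, j)
    = (\<Sum>a<n2. diag_shift ((a + k) * n1) (\<Sum>c<n1. dyad (x c) (w c)) i j)"
proof -
  have D: "blockdiag n1 n2 (diag_of n1 (\<lambda>c. inverse (w c))) \<in> carrier_mat (n1 * n2) (n1 * n2)"
    unfolding blockdiag_def by (rule block_mat_carrier)
  have "(mat_adjoint L * blockdiag n1 n2 (diag_of n1 (\<lambda>c. inverse (w c))) * L) $$ (i, j)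
      = (\<Sum>r<n2 * n1. cnj (L $$ (r, i)) * inverse (w (r mod n1)) * L $$ (r, j))"
    by (subst mult.commute, rule adjoint_diag_mult_index[OF L D _ i j])
      (simp add: blockdiag_diag_of_index)
  also have "\<dots> = (\<Sum>a<n2. \<Sum>c<n1. cnj (L $$ (a * n1 + c, i)) * inverse (w c) * L $$ (a * n1 + c, j))"
    unfolding sum_lessThan_mult by (intro sum.cong refl) simp
  also have "\<dots> = (\<Sum>a<n2. \<Sum>c<n1. diag_shift ((a + k) * n1) (dyad (x c) (w c)) i j)"
    using rows i j
    by (intro sum.cong refl) (simp add: diag_shift_def dyad_def divide_inverse mult_ac)
  also have "\<dots> = (\<Sum>a<n2. diag_shift ((a + k) * n1) (\<Sum>c<n1. dyad (x c) (w c)) i j)"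
    by (simp add: diag_shift_sum_apply)
  finally show ?thesis .
qed

lemma block_toeplitz_gram:
  assumes B: "\<And>a b. a < n2 \<Longrightarrow> b < n2 \<Longrightarrow> B a b = (if a + k \<le> b
      then transpose_mat (mat n1 n1 (\<lambda>(e, c). x c $ ((b - a - k) * n1 + e))) else 0\<^sub>m n1 n1)"
    and dim: "\<And>c. c < n1 \<Longrightarrow> dim_vec (x c) = n1 * n2"
    and i: "i < n1 * n2" and j: "j < n1 * n2"
  shows "(mat_adjoint (block_mat n1 n2 B) * blockdiag n1 n2 (diag_of n1 (\<lambda>c. inverse (w c)))
      * block_mat n1 n2 B) $$ (i, j)
    = (\<Sum>a<n2. diag_shift ((a + k) * n1) (\<Sum>c<n1. dyad (x c) (w c)) i j)"
  by (rule block_gram_diag_shift[OF block_mat_carrier block_toeplitz_rows[OF B dim] i j])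

theorem mainTheorem5:
  fixes n1 n2 n :: nat and Rb :: "int \<Rightarrow> complex mat" and R :: "complex mat"
    and P Q :: "nat \<Rightarrow> complex mat" and Lp Lq :: "complex mat"
  assumes n1: "n1 \<ge> 1" and n2: "n2 \<ge> 1" and n_def: "n = n1 * n2"
    and Rb_carrier: "\<And>m. \<bar>m\<bar> < int n2 \<Longrightarrow> Rb m \<in> carrier_mat n1 n1"
    and Rb_herm: "\<And>m. \<bar>m\<bar> < int n2 \<Longrightarrow> Rb (- m) = mat_adjoint (Rb m)"
    and R_def: "R = block_mat n1 n2 (\<lambda>a b. Rb (int b - int a))"
    and R_hpd: "herm_pos_def n R"
  defines "P \<equiv> \<lambda>j. mat n1 n1 (\<lambda>(i, c). pvec R n c (n - 1) $ (j * n1 + i))"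
    and "Q \<equiv> \<lambda>j. mat n1 n1 (\<lambda>(i, c). qvec R n 0 (n - n1 + c) $ ((n2 - 1 - j) * n1 + i))"
    and "Lp \<equiv> block_mat n1 n2 (\<lambda>a b. if a \<le> b then transpose_mat (P (b - a)) else 0\<^sub>m n1 n1)"
    and "Lq \<equiv> block_mat n1 n2 (\<lambda>a b. if a < b then transpose_mat (Q (n2 - (b - a))) else 0\<^sub>m n1 n1)"
  shows "inverts_mat R
           (mat_adjoint Lp * blockdiag n1 n2 (diag_of n1 (\<lambda>c. inverse (vcoef' R n c (n - 1)))) * Lp
            - mat_adjoint Lq * blockdiag n1 n2 (diag_of n1 (\<lambda>c. inverse (vcoef R n 0 (n - n1 + c)))) * Lq)
       \<and> inverts_mat
           (mat_adjoint Lp * blockdiag n1 n2 (diag_of n1 (\<lambda>c. inverse (vcoef' R n c (n - 1)))) * Lp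
            - mat_adjoint Lq * blockdiag n1 n2 (diag_of n1 (\<lambda>c. inverse (vcoef R n 0 (n - n1 + c)))) * Lq) R"
proof -
  define F where "F = (\<Sum>c<n1. dyad (pvec R n c (n - 1)) (vcoef' R n c (n - 1)))"
  define G where "G = (\<Sum>c<n1. dyad (qvec R n 0 (n - n1 + c)) (vcoef R n 0 (n - n1 + c)))"
  define Y where "Y = (\<Sum>t<n. dyad (qvec R n 0 t) (vcoef R n 0 t))"
  have "Y = diag_shift n1 (Y - G) + F"
    unfolding Y_def G_def F_def
    by (rule qvec_dyads_recursion[OF R_hpd])
      (use n_def n2 in \<open>auto simp: R_def block_toeplitz_shift\<close>)
  then have Y_blocks: "Y i j
      = (\<Sum>a<n2. diag_shift (a * n1) F i j) - (\<Sum>a<n2. diag_shift (Suc a * n1) G i j)"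
    if "i < n" for i j
    using that n_def by (intro diag_shift_telescope_index) (simp_all add: mult.commute)
  have "n1 \<le> n"
    using n_def n2 by simp
  then have dims: "dim_vec (pvec R n c (n - 1)) = n" "dim_vec (qvec R n 0 (n - n1 + c)) = n"
    if "c < n1" for c
    using that orth_unit_carrier[OF pvec_orth_unit[OF R_hpd, of c "n - 1"]]
      orth_unit_carrier[OF qvec_orth_unit[OF R_hpd, of 0 "n - n1 + c"]] by auto
  have Lp_gram: "(mat_adjoint Lp
      * blockdiag n1 n2 (diag_of n1 (\<lambda>c. inverse (vcoef' R n c (n - 1)))) * Lp) $$ (i, j)
      = (\<Sum>a<n2. diag_shift ((a + 0) * n1) F i j)" if "i < n" "j < n" for i j
    unfolding Lp_def F_def
    by (rule block_toeplitz_gram[where x = "\<lambda>c. pvec R n c (n - 1)"])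
      (use that dims n_def in \<open>simp_all add: P_def\<close>)
  have Lq_gram: "(mat_adjoint Lq
      * blockdiag n1 n2 (diag_of n1 (\<lambda>c. inverse (vcoef R n 0 (n - n1 + c)))) * Lq) $$ (i, j)
      = (\<Sum>a<n2. diag_shift ((a + 1) * n1) G i j)" if "i < n" "j < n" for i j
    unfolding Lq_def G_def
    by (rule block_toeplitz_gram[where x = "\<lambda>c. qvec R n 0 (n - n1 + c)"])
      (use that dims n_def in \<open>auto simp: Q_def\<close>)
  have carriers:
    "Lp \<in> carrier_mat n n" "Lq \<in> carrier_mat n n" "blockdiag n1 n2 M \<in> carrier_mat n n" for M
    unfolding Lp_def Lq_def blockdiag_def n_def by (rule block_mat_carrier)+
  show ?thesis
    by (rule inverse_on_inverts_mat[OF herm_pos_def_carrier[OF R_hpd] _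
          inverse_on_qvec_dyads[OF R_hpd order_refl, folded Y_def]])
      (use carriers mat_adjoint_carrier[OF carriers(1)] mat_adjoint_carrier[OF carriers(2)]
        Lp_gram Lq_gram Y_blocks in auto)
qed

end
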